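(* Let $(a_0,a_2)$ be any one of the four pairs $$\Big(1+\tfrac{i}{2}-\tfrac{\sqrt3}{2},\,-i\Big),\ \Big(1+\tfrac{i}{2}+\tfrac{\sqrt3}{2},\,-i\Big),\ \Big(1-\tfrac{i}{2}-\tfrac{\sqrt3}{2},\,i\Big),\ \Big(1-\tfrac{i}{2}+\tfrac{\sqrt3}{2},\,i\Big).$$ Then the second-order recursion $$z_n = \frac{a_2 z_{n-2} + z_{n-1} + a_0}{z_{n-2}}$$ (that is, $z_n = \frac{-2i z_{n-2}+2z_{n-1}+(2\mp\sqrt3+i)}{2z_{n-2}}$ or $z_n = \frac{2i z_{n-2}+2z_{n-1}+(2\mp\sqrt3-i)}{2z_{n-2}}$) is periodic with period $12$: for the sequence defined from indeterminates $z_1,z_2$ one has $z_{13}=z_1$ and $z_{14}=z_2$ in $\mathbb{C}(z_1,z_2)$, hence $z_{n+12}=z_n$ for all $n\ge1$.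
   Context: Let $z_1,z_2$ be independent indeterminates over $\mathbb{C}$, and define $z_n\in\mathbb{C}(z_1,z_2)$ for $n\ge3$ by the given recursion. A second-order recursion is periodic with period $k$ if all iterates are well-defined elements of $\mathbb{C}(z_1,z_2)$ (no denominator identically zero) and $z_{k+1}=z_1$, $z_{k+2}=z_2$; equivalently every complex sequence satisfying the recursion with no vanishing denominator satisfies $z_{n+k}=z_n$ for all $n$. *)

theory Defs
  imports Complex_Main
begin

definition satisfies_rec :: "complex \<Rightarrow> complex \<Rightarrow> (nat \<Rightarrow> complex) \<Rightarrow> bool" where
  "satisfies_rec a0 a2 z \<longleftrightarrow>
     (\<forall>n\<ge>1. z n \<noteq> 0 \<and> z (n + 2) = (a2 * z n + z (n + 1) + a0) / z n)"

end

theory Submission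
  imports Defs
begin

text \<open>Clearing denominators, the iterates are \<open>w k = N (k + 3) / (N (k + 1) * N k)\<close>, where
  the \<open>N k\<close> are polynomials in the parameters \<open>a, b\<close> and the initial values \<open>x = w 0\<close>,
  \<open>y = w 1\<close> that obey a division-free cubic recursion, whatever \<open>a\<close> and \<open>b\<close> are. The four
  parameter pairs are exactly the solutions of \<open>a\<^sup>2 = -1\<close>, \<open>b\<^sup>2 = (2 - a) b + a\<close>. Modulo these
  relations the \<open>N k\<close> stay of moderate size, \<open>N 12\<close> divides \<open>N 14\<close>, and \<open>N 15 = x N 13 N 12\<close>,
  which says \<open>w 12 = w 0\<close>.\<close>

fun numer :: "'a::comm_ring_1 \<Rightarrow> 'a \<Rightarrow> 'a \<Rightarrow> 'a \<Rightarrow> nat \<Rightarrow> 'a" where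
  "numer a b x y 0 = 1"
| "numer a b x y (Suc 0) = 1"
| "numer a b x y (Suc (Suc 0)) = 1"
| "numer a b x y (Suc (Suc (Suc 0))) = x"
| "numer a b x y (Suc (Suc (Suc (Suc 0)))) = y"
| "numer a b x y (Suc (Suc (Suc (Suc (Suc n))))) =
     a * numer a b x y (n + 3) * numer a b x y (n + 2) + numer a b x y (n + 4) * numer a b x y n
     + b * numer a b x y (n + 2) * numer a b x y (n + 1) * numer a b x y n"

lemma numer_initial [simp]:
  "numer a b x y 0 = 1" "numer a b x y 1 = 1" "numer a b x y 2 = 1"
  "numer a b x y 3 = x" "numer a b x y 4 = y"
  by (simp_all add: numeral_eq_Suc)

lemma numer_rec:
  "numer a b x y (n + 5) =
     a * numer a b x y (n + 3) * numer a b x y (n + 2) + numer a b x y (n + 4) * numer a b x y n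
     + b * numer a b x y (n + 2) * numer a b x y (n + 1) * numer a b x y n"
  by (simp add: numeral_eq_Suc)

lemma numer_eq_iterate_prod:
  fixes w :: "nat \<Rightarrow> 'a::comm_ring_1"
  assumes rec: "\<And>j. w j * w (j + 2) = a * w j + w (j + 1) + b"
  defines "N \<equiv> numer a b (w 0) (w 1)"
  shows "N (k + 3) = w k * N (k + 1) * N k"
proof (induction k rule: induct_nat_012)
  case 0
  show ?case by (simp add: N_def)
next
  case 1
  show ?case by (simp add: N_def)
next
  case (ge2 k)
  have IH: "N (k + 3) = w k * N (k + 1) * N k" "N (k + 4) = w (k + 1) * N (k + 2) * N (k + 1)"
    using ge2 by (simp_all add: add.commute add.left_commute)
  have "N (k + 5) = a * N (k + 3) * N (k + 2) + N (k + 4) * N k + b * N (k + 2) * N (k + 1) * N k"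
    unfolding N_def by (rule numer_rec)
  also have "\<dots> = N (k + 2) * N (k + 1) * N k * (a * w k + w (k + 1) + b)"
    unfolding IH by (simp add: algebra_simps)
  also have "\<dots> = w (k + 2) * N (k + 3) * N (k + 2)"
    unfolding rec[symmetric] IH(1) by (simp add: algebra_simps)
  finally show ?case by (simp add: numeral_eq_Suc)
qed

lemma numer_nonzero:
  fixes w :: "nat \<Rightarrow> 'a::idom"
  assumes nonzero: "\<And>j. w j \<noteq> 0"
    and rec: "\<And>j. w j * w (j + 2) = a * w j + w (j + 1) + b"
  shows "numer a b (w 0) (w 1) k \<noteq> 0"
proof (induction k rule: less_induct)
  case (less k)
  show ?case
  proof (cases "k < 3")
    case True
    then have "k = 0 \<or> k = 1 \<or> k = 2" by auto
    then show ?thesis by auto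
  next
    case False
    then obtain j where "k = j + 3" by (metis add.commute le_Suc_ex not_less)
    then show ?thesis
      using numer_eq_iterate_prod[OF rec, of j] nonzero less.IH by simp
  qed
qed

definition numer14_div_numer12 :: "'a::comm_ring_1 \<Rightarrow> 'a \<Rightarrow> 'a \<Rightarrow> 'a \<Rightarrow> 'a" where
  "numer14_div_numer12 a b x y =
    - 15 + 4*a + 15*b + 26*a*b - 32*y + 16*b*y + 60*a*b*y - 24*y^2 - 6*a*y^2 + 48*a*b*y^2
    - 8*y^3 - 4*a*y^3 - 4*b*y^3 + 16*a*b*y^3 - y^4 - a*y^4 - b*y^4 + 2*a*b*y^4 - 57*x
    - 19*a*x - 7*b*x + 116*a*b*x - 105*x*y - 64*a*x*y - 68*b*x*y + 228*a*b*x*y - 69*x*y^2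
    - 66*a*x*y^2 - 90*b*x*y^2 + 159*a*b*x*y^2 - 19*x*y^3 - 29*a*x*y^3 - 42*b*x*y^3
    + 47*a*b*x*y^3 - x*y^4 - 5*a*x*y^4 - 7*b*x*y^4 + 5*a*b*x*y^4 - 55*x^2 - 73*a*x^2
    - 109*b*x^2 + 139*a*b*x^2 - 82*x^2*y - 164*a*x^2*y - 265*b*x^2*y + 233*a*b*x^2*y
    - 36*x^2*y^2 - 132*a*x^2*y^2 - 224*b*x^2*y^2 + 131*a*b*x^2*y^2 - x^2*y^3 - 45*a*x^2*y^3
    - 79*b*x^2*y^3 + 27*a*b*x^2*y^3 + 2*x^2*y^4 - 5*a*x^2*y^4 - 10*b*x^2*y^4 + a*b*x^2*y^4
    - x^3 - 69*a*x^3 - 128*b*x^3 + 36*a*b*x^3 + 16*x^3*y - 131*a*x^3*y - 250*b*x^3*y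
    + 36*a*b*x^3*y + 26*x^3*y^2 - 84*a*x^3*y^2 - 168*b*x^3*y^2 - 2*a*b*x^3*y^2 + 11*x^3*y^3
    - 19*a*x^3*y^3 - 43*b*x^3*y^3 - 8*a*b*x^3*y^3 + x^3*y^4 - a*x^3*y^4 - 3*b*x^3*y^4
    - a*b*x^3*y^4 + 16*x^4 - 21*a*x^4 - 47*b*x^4 - 19*a*b*x^4 + 31*x^4*y - 33*a*x^4*y
    - 78*b*x^4*y - 40*a*b*x^4*y + 18*x^4*y^2 - 15*a*x^4*y^2 - 39*b*x^4*y^2 - 26*a*b*x^4*y^2
    + 3*x^4*y^3 - 2*a*x^4*y^3 - 6*b*x^4*y^3 - 5*a*b*x^4*y^3 + 4*x^5 - a*x^5 - 4*b*x^5
    - 7*a*b*x^5 + 6*x^5*y - a*x^5*y - 5*b*x^5*y - 11*a*b*x^5*y + 2*x^5*y^2 - b*x^5*y^2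
    - 4*a*b*x^5*y^2"

text \<open>The explicit forms of \<open>N k\<close> are reduced modulo the parameter relations, hence of
  degree at most one in \<open>a\<close> and in \<open>b\<close>.\<close>

context
  fixes a b x y :: "'a::idom"
  assumes a_sq: "a^2 = -1" and b_sq: "b^2 = (2 - a) * b + a"
begin

abbreviation N :: "nat \<Rightarrow> 'a" where "N \<equiv> numer a b x y"

lemma numer_5: "N 5 = a*x + y + b"
  using numer_rec[of a b x y 0] by simp

lemma numer_6: "N 6 = b + y + a*x + b*x + a*x*y"
  unfolding numer_rec[of a b x y 1, simplified] numer_5 by (simp add: algebra_simps)

lemma numer_7: "N 7 = b + y + a*b*y + a*y^2 + a*x + b*x - x*y + a*x*y + b*x*y"
  unfolding numer_rec[of a b x y 2, simplified] numer_5 numer_6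
  using a_sq b_sq by algebra

lemma numer_8:
  "N 8 =
    - 1 + b + 2*a*b + 2*a*b*y + a*y^2 - x + 2*a*b*x - x*y + a*x*y + b*x*y + a*b*x*y - x*y^2
    + a*x*y^2 + b*x*y^2 - x^2*y + b*x^2*y + a*b*x^2*y"
  unfolding numer_rec[of a b x y 3, simplified] numer_5 numer_6 numer_7
  using a_sq b_sq by algebra

lemma numer_9:
  "N 9 =
    - 1 + b + 2*a*b + a*y + 2*b*y + 2*a*b*y + 3*a*y^2 + 2*b*y^2 - y^3 + a*y^3 + b*y^3 - 2*x
    + 4*a*b*x - 5*x*y + a*x*y + 2*b*x*y + 6*a*b*x*y - 4*x*y^2 + 3*b*x*y^2 + 4*a*b*x*y^2
    - x*y^3 + b*x*y^3 + a*b*x*y^3 - x^2 - a*x^2 - b*x^2 + 2*a*b*x^2 - x^2*y - 2*a*x^2*y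
    - 2*b*x^2*y + 3*a*b*x^2*y - a*x^2*y^2 - b*x^2*y^2 + a*b*x^2*y^2"
  unfolding numer_rec[of a b x y 4, simplified] numer_5 numer_6 numer_7 numer_8
  using a_sq b_sq by algebra

lemma numer_10:
  "N 10 =
    2*a + 4*b - a*b - y + 7*a*y + 14*b*y - 3*y^2 + 9*a*y^2 + 15*b*y^2 + 3*a*b*y^2 - 4*y^3
    + 4*a*y^3 + 7*b*y^3 + 3*a*b*y^3 - y^4 + b*y^4 + a*b*y^4 - 4*x + 4*a*x + 9*b*x + 6*a*b*x
    - 17*x*y + 7*a*x*y + 18*b*x*y + 27*a*b*x*y - 19*x*y^2 - a*x*y^2 + 7*b*x*y^2
    + 29*a*b*x*y^2 - 6*x*y^3 - 5*a*x*y^3 - 2*b*x*y^3 + 11*a*b*x*y^3 - a*x*y^4 - b*x*y^4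
    + a*b*x*y^4 - 6*x^2 - a*x^2 + b*x^2 + 11*a*b*x^2 - 12*x^2*y - 11*a*x^2*y - 12*b*x^2*y
    + 26*a*b*x^2*y - 3*x^2*y^2 - 11*a*x^2*y^2 - 15*b*x^2*y^2 + 13*a*b*x^2*y^2 + x^2*y^3
    - 2*a*x^2*y^3 - 4*b*x^2*y^3 + a*b*x^2*y^3 - x^3 - 2*a*x^3 - 3*b*x^3 + 3*a*b*x^3 + x^3*y
    - 4*a*x^3*y - 8*b*x^3*y + a*b*x^3*y + x^3*y^2 - a*x^3*y^2 - 3*b*x^3*y^2 - a*b*x^3*y^2"
  unfolding numer_rec[of a b x y 5, simplified] numer_5 numer_6 numer_7 numer_8 numer_9
  using a_sq b_sq by algebra

lemma numer_11:
  "N 11 =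
    8*a + 15*b - 4*a*b - 12*y + 16*a*y + 36*b*y + 15*a*b*y - 22*y^2 + 8*a*y^2 + 24*b*y^2
    + 38*a*b*y^2 - 16*y^3 - 2*a*y^3 + 2*b*y^3 + 28*a*b*y^3 - 5*y^4 - 4*a*y^4 - 3*b*y^4
    + 9*a*b*y^4 - a*y^5 - b*y^5 + a*b*y^5 - 16*x + 22*a*x + 49*b*x + 19*a*b*x - 64*x*y
    + 21*a*x*y + 70*b*x*y + 109*a*b*x*y - 76*x*y^2 - 21*a*x*y^2 - 3*b*x*y^2 + 149*a*b*x*y^2
    - 37*x*y^3 - 36*a*x*y^3 - 45*b*x*y^3 + 82*a*b*x*y^3 - 5*x*y^4 - 17*a*x*y^4 - 24*b*x*y^4
    + 19*a*b*x*y^4 + x*y^5 - 2*a*x*y^5 - 4*b*x*y^5 + a*b*x*y^5 - 33*x^2 + 9*a*x^2 + 33*b*x^2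
    + 57*a*b*x^2 - 77*x^2*y - 27*a*x^2*y - 12*b*x^2*y + 155*a*b*x^2*y - 55*x^2*y^2
    - 75*a*x^2*y^2 - 107*b*x^2*y^2 + 138*a*b*x^2*y^2 - 6*x^2*y^3 - 55*a*x^2*y^3
    - 95*b*x^2*y^3 + 44*a*b*x^2*y^3 + 5*x^2*y^4 - 14*a*x^2*y^4 - 30*b*x^2*y^4 + a*b*x^2*y^4
    + x^2*y^5 - a*x^2*y^5 - 3*b*x^2*y^5 - a*b*x^2*y^5 - 17*x^3 - 9*a*x^3 - 8*b*x^3
    + 36*a*b*x^3 - 19*x^3*y - 37*a*x^3*y - 58*b*x^3*y + 55*a*b*x^3*y + 6*x^3*y^2
    - 42*a*x^3*y^2 - 82*b*x^3*y^2 + 13*a*b*x^3*y^2 + 12*x^3*y^3 - 17*a*x^3*y^3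
    - 40*b*x^3*y^3 - 13*a*b*x^3*y^3 + 3*x^3*y^4 - 2*a*x^3*y^4 - 6*b*x^3*y^4 - 5*a*b*x^3*y^4
    - x^4 - 4*a*x^4 - 7*b*x^4 + 4*a*b*x^4 + 3*x^4*y - 7*a*x^4*y - 15*b*x^4*y - 2*a*b*x^4*y
    + 6*x^4*y^2 - 3*a*x^4*y^2 - 9*b*x^4*y^2 - 10*a*b*x^4*y^2 + 2*x^4*y^3 - b*x^4*y^3
    - 4*a*b*x^4*y^3"
  unfolding numer_rec[of a b x y 6, simplified] numer_6 numer_7 numer_8 numer_9 numer_10
  using a_sq b_sq by algebra

lemma numer_12:
  "N 12 =
    - 15 + 4*a + 15*b + 26*a*b - 89*y - 11*a*y + 24*b*y + 172*a*b*y - 185*y^2 - 100*a*y^2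
    - 96*b*y^2 + 396*a*b*y^2 - 175*y^3 - 195*a*y^3 - 280*b*y^3 + 420*a*b*y^3 - 75*y^4
    - 175*a*y^4 - 285*b*y^4 + 220*a*b*y^4 - 5*y^5 - 81*a*y^5 - 141*b*y^5 + 51*a*b*y^5
    + 6*y^6 - 17*a*y^6 - 34*b*y^6 + a*b*y^6 + y^7 - a*y^7 - 3*b*y^7 - a*b*y^7 - 60*x
    - 16*a*x + 120*a*b*x - 260*x*y - 208*a*x*y - 259*b*x*y + 588*a*b*x*y - 354*x*y^2
    - 635*a*x*y^2 - 1005*b*x*y^2 + 973*a*b*x*y^2 - 133*x*y^3 - 836*a*x*y^3 - 1481*b*x*y^3
    + 667*a*b*x*y^3 + 92*x*y^4 - 560*a*x*y^4 - 1084*b*x*y^4 + 122*a*b*x*y^4 + 97*x*y^5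
    - 196*a*x*y^5 - 419*b*x*y^5 - 73*a*b*x*y^5 + 30*x*y^6 - 33*a*x*y^6 - 81*b*x*y^6
    - 38*a*b*x*y^6 + 3*x*y^7 - 2*a*x*y^7 - 6*b*x*y^7 - 5*a*b*x*y^7 - 66*x^2 - 66*a*x^2
    - 90*b*x^2 + 156*a*b*x^2 - 150*x^2*y - 435*a*x^2*y - 735*b*x^2*y + 498*a*b*x^2*y
    + 72*x^2*y^2 - 917*a*x^2*y^2 - 1746*b*x^2*y^2 + 330*a*b*x^2*y^2 + 417*x^2*y^3
    - 883*a*x^2*y^3 - 1863*b*x^2*y^3 - 329*a*b*x^2*y^3 + 407*x^2*y^4 - 425*a*x^2*y^4
    - 1007*b*x^2*y^4 - 546*a*b*x^2*y^4 + 172*x^2*y^5 - 97*a*x^2*y^5 - 273*b*x^2*y^5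
    - 276*a*b*x^2*y^5 + 32*x^2*y^6 - 8*a*x^2*y^6 - 32*b*x^2*y^6 - 58*a*b*x^2*y^6 + 2*x^2*y^7
    - b*x^2*y^7 - 4*a*b*x^2*y^7 - 16*x^3 - 60*a*x^3 - 104*b*x^3 + 60*a*b*x^3 + 65*x^3*y
    - 272*a*x^3*y - 541*b*x^3*y + 15*a*b*x^3*y + 320*x^3*y^2 - 397*a*x^3*y^2 - 903*b*x^3*y^2
    - 400*a*b*x^3*y^2 + 429*x^3*y^3 - 230*a*x^3*y^3 - 645*b*x^3*y^3 - 689*a*b*x^3*y^3
    + 250*x^3*y^4 - 34*a*x^3*y^4 - 188*b*x^3*y^4 - 453*a*b*x^3*y^4 + 65*x^3*y^5
    + 12*a*x^3*y^5 - 9*b*x^3*y^5 - 129*a*b*x^3*y^5 + 6*x^3*y^6 + 3*a*x^3*y^6 + 3*b*x^3*y^6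
    - 13*a*b*x^3*y^6 + 4*x^4 - 15*a*x^4 - 30*b*x^4 + 46*x^4*y - 44*a*x^4*y - 105*b*x^4*y
    - 64*a*b*x^4*y + 102*x^4*y^2 - 27*a*x^4*y^2 - 101*b*x^4*y^2 - 177*a*b*x^4*y^2
    + 86*x^4*y^3 + 19*a*x^4*y^3 - 7*b*x^4*y^3 - 170*a*b*x^4*y^3 + 29*x^4*y^4 + 22*a*x^4*y^4
    + 27*b*x^4*y^4 - 65*a*b*x^4*y^4 + 3*x^4*y^5 + 5*a*x^4*y^5 + 8*b*x^4*y^5 - 8*a*b*x^4*y^5"
  unfolding numer_rec[of a b x y 7, simplified] numer_7 numer_8 numer_9 numer_10 numer_11
  using a_sq b_sq by algebra

lemma numer_13:
  "N 13 =
    - 153 - 41*a + 306*a*b - 818*y - 537*a*y - 593*b*y + 1795*a*b*y - 1575*y^2 - 2015*a*y^2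
    - 2973*b*y^2 + 3947*a*b*y^2 - 1246*y^3 - 3570*a*y^3 - 6041*b*y^3 + 4109*a*b*y^3 - 35*y^4
    - 3521*a*y^4 - 6552*b*y^4 + 1820*a*b*y^4 + 665*y^5 - 2051*a*y^5 - 4151*b*y^5
    - 217*a*b*y^5 + 518*y^6 - 700*a*y^6 - 1561*b*y^6 - 609*a*b*y^6 + 183*y^7 - 127*a*y^7
    - 332*b*y^7 - 274*a*b*y^7 + 31*y^8 - 9*a*y^8 - 34*b*y^8 - 54*a*b*y^8 + 2*y^9 - b*y^9
    - 4*a*b*y^9 - 575*x - 698*a*x - 1015*b*x + 1422*a*b*x - 1836*x*y - 4960*a*x*y
    - 8338*b*x*y + 5906*a*b*x*y - 348*x*y^2 - 13069*a*x*y^2 - 24214*b*x*y^2 + 7181*a*b*x*y^2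
    + 5298*x*y^3 - 17467*a*x*y^3 - 35235*b*x*y^3 - 1159*a*b*x*y^3 + 9157*x*y^4
    - 13138*a*x*y^4 - 29076*b*x*y^4 - 10508*a*b*x*y^4 + 7300*x*y^5 - 5602*a*x*y^5
    - 14106*b*x*y^5 - 10793*a*b*x*y^5 + 3253*x*y^6 - 1201*a*x*y^6 - 3890*b*x*y^6
    - 5461*a*b*x*y^6 + 824*x*y^7 - 51*a*x*y^7 - 517*b*x*y^7 - 1520*a*b*x*y^7 + 110*x*y^8
    + 24*a*x*y^8 - 10*b*x*y^8 - 221*a*b*x*y^8 + 6*x*y^9 + 3*a*x*y^9 + 3*b*x*y^9
    - 13*a*b*x*y^9 - 104*x^2 - 2180*a*x^2 - 4016*b*x^2 + 1284*a*b*x^2 + 3561*x^2*y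
    - 11480*a*x^2*y - 23202*b*x^2*y - 906*a*b*x^2*y + 16417*x^2*y^2 - 22519*a*x^2*y^2
    - 50223*b*x^2*y^2 - 19375*a*b*x^2*y^2 + 29411*x^2*y^3 - 21200*a*x^2*y^3
    - 54257*b*x^2*y^3 - 44263*a*b*x^2*y^3 + 27883*x^2*y^4 - 9191*a*x^2*y^4 - 31118*b*x^2*y^4
    - 47405*a*b*x^2*y^4 + 15356*x^2*y^5 - 329*a*x^2*y^5 - 8339*b*x^2*y^5 - 28502*a*b*x^2*y^5
    + 4992*x^2*y^6 + 1356*a*x^2*y^6 + 25*b*x^2*y^6 - 10029*a*b*x^2*y^6 + 923*x^2*y^7
    + 550*a*x^2*y^7 + 576*b*x^2*y^7 - 2009*a*b*x^2*y^7 + 87*x^2*y^8 + 88*a*x^2*y^8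
    + 124*b*x^2*y^8 - 206*a*b*x^2*y^8 + 3*x^2*y^9 + 5*a*x^2*y^9 + 8*b*x^2*y^9
    - 8*a*b*x^2*y^9 + 1680*x^3 - 2350*a*x^3 - 5225*b*x^3 - 1960*a*b*x^3 + 12350*x^3*y
    - 8266*a*x^3*y - 21598*b*x^3*y - 18911*a*b*x^3*y + 30882*x^3*y^2 - 8207*a*x^3*y^2
    - 30759*b*x^3*y^2 - 53513*a*b*x^3*y^2 + 37986*x^3*y^3 + 2031*a*x^3*y^3 - 15233*b*x^3*y^3
    - 71896*a*b*x^3*y^3 + 25899*x^3*y^4 + 9604*a*x^3*y^4 + 4947*b*x^3*y^4
    - 53174*a*b*x^3*y^4 + 10032*x^3*y^5 + 7577*a*x^3*y^5 + 9151*b*x^3*y^5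
    - 22551*a*b*x^3*y^5 + 2104*x^3*y^6 + 2811*a*x^3*y^6 + 4223*b*x^3*y^6 - 5330*a*b*x^3*y^6
    + 200*x^3*y^7 + 514*a*x^3*y^7 + 864*b*x^3*y^7 - 623*a*b*x^3*y^7 + 4*x^3*y^8
    + 37*a*x^3*y^8 + 67*b*x^3*y^8 - 25*a*b*x^3*y^8 + 2200*x^4 - 560*a*x^4 - 2145*b*x^4
    - 3825*a*b*x^4 + 10698*x^4*y + 1302*a*x^4*y - 2922*b*x^4*y - 20613*a*b*x^4*y
    + 19022*x^4*y^2 + 9231*a*x^4*y^2 + 7707*b*x^4*y^2 - 40120*a*b*x^4*y^2 + 16216*x^4*y^3
    + 15517*a*x^4*y^3 + 20859*b*x^4*y^3 - 38042*a*b*x^4*y^3 + 6803*x^4*y^4 + 12258*a*x^4*y^4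
    + 19508*b*x^4*y^4 - 18824*a*b*x^4*y^4 + 1096*x^4*y^5 + 5062*a*x^4*y^5 + 8912*b*x^4*y^5
    - 4553*a*b*x^4*y^5 - 79*x^4*y^6 + 1049*a*x^4*y^6 + 1993*b*x^4*y^6 - 367*a*b*x^4*y^6
    - 32*x^4*y^7 + 85*a*x^4*y^7 + 173*b*x^4*y^7 + 18*a*b*x^4*y^7 + 938*x^5 + 499*a*x^5
    + 462*b*x^5 - 2000*a*b*x^5 + 2954*x^5*y + 3492*a*x^5*y + 5040*b*x^5*y - 7260*a*b*x^5*y
    + 2896*x^5*y^2 + 7456*a*x^5*y^2 + 12472*b*x^5*y^2 - 9132*a*b*x^5*y^2 + 424*x^5*y^3
    + 7270*a*x^5*y^3 + 13360*b*x^5*y^3 - 4415*a*b*x^5*y^3 - 893*x^5*y^4 + 3547*a*x^5*y^4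
    + 7059*b*x^5*y^4 - 96*a*b*x^5*y^4 - 504*x^5*y^5 + 823*a*x^5*y^5 + 1781*b*x^5*y^5
    + 530*a*b*x^5*y^5 - 79*x^5*y^6 + 69*a*x^5*y^6 + 167*b*x^5*y^6 + 112*a*b*x^5*y^6 + 82*x^6
    + 262*a*x^6 + 448*b*x^6 - 284*a*b*x^6 - 91*x^6*y + 1043*a*x^6*y + 1992*b*x^6*y
    - 351*a*b*x^6*y - 646*x^6*y^2 + 1438*a*x^6*y^2 + 3005*b*x^6*y^2 + 488*a*b*x^6*y^2
    - 774*x^6*y^3 + 852*a*x^6*y^3 + 1974*b*x^6*y^3 + 1018*a*b*x^6*y^3 - 353*x^6*y^4
    + 204*a*x^6*y^4 + 556*b*x^6*y^4 + 555*a*b*x^6*y^4 - 55*x^6*y^5 + 12*a*x^6*y^5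
    + 50*b*x^6*y^5 + 96*a*b*x^6*y^5 - 15*x^7 + 26*a*x^7 + 56*b*x^7 + 15*a*b*x^7 - 78*x^7*y
    + 59*a*x^7*y + 149*b*x^7*y + 116*a*b*x^7*y - 114*x^7*y^2 + 37*a*x^7*y^2 + 126*b*x^7*y^2
    + 194*a*b*x^7*y^2 - 62*x^7*y^3 + a*x^7*y^3 + 33*b*x^7*y^3 + 115*a*b*x^7*y^3 - 11*x^7*y^4
    - 3*a*x^7*y^4 + 22*a*b*x^7*y^4"
  unfolding numer_rec[of a b x y 8, simplified] numer_8 numer_9 numer_10 numer_11 numer_12
  using a_sq b_sq by algebra

lemma numer_14: "N 14 = N 12 * numer14_div_numer12 a b x y"
  unfolding numer_rec[of a b x y 9, simplified] numer_13 numer_12 numer_11 numer_10 numer_9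
    numer14_div_numer12_def
  using a_sq b_sq by algebra

lemma numer_15: "N 15 = x * N 13 * N 12"
proof -
  have "a * N 13 + numer14_div_numer12 a b x y * N 10 + b * N 11 * N 10 = x * N 13"
    unfolding numer_13 numer_11 numer_10 numer14_div_numer12_def
    using a_sq b_sq by algebra
  then show ?thesis
    unfolding numer_rec[of a b x y 10, simplified] numer_14 by algebra
qed

end

lemma period_12:
  fixes w :: "nat \<Rightarrow> 'a::idom"
  assumes "a^2 = -1" "b^2 = (2 - a) * b + a"
    and nonzero: "\<And>j. w j \<noteq> 0"
    and rec: "\<And>j. w j * w (j + 2) = a * w j + w (j + 1) + b"
  shows "w 12 = w 0"
proof -
  let ?N = "numer a b (w 0) (w 1)"
  have "w 12 * (?N 13 * ?N 12) = ?N 15"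
    using numer_eq_iterate_prod[OF rec, of 12] by (simp add: mult.assoc)
  also have "\<dots> = w 0 * (?N 13 * ?N 12)"
    using numer_15[OF assms(1,2)] by (simp add: mult.assoc)
  finally show ?thesis
    using numer_nonzero[OF nonzero rec] by simp
qed

lemma parameter_relations:
  fixes a0 a2 :: complex
  assumes "(a0, a2) \<in>
     {(1 + \<i>/2 - complex_of_real (sqrt 3)/2, -\<i>),
      (1 + \<i>/2 + complex_of_real (sqrt 3)/2, -\<i>),
      (1 - \<i>/2 - complex_of_real (sqrt 3)/2, \<i>),
      (1 - \<i>/2 + complex_of_real (sqrt 3)/2, \<i>)}"
  shows "a2^2 = -1" "a0^2 = (2 - a2) * a0 + a2"
proof -
  define s where "s = complex_of_real (sqrt 3)"
  have "s^2 = 3"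
    unfolding s_def by (simp flip: of_real_power)
  from assms have a2: "a2 = \<i> \<or> a2 = -\<i>" and "a0 = 1 - a2/2 + s/2 \<or> a0 = 1 - a2/2 - s/2"
    unfolding s_def[symmetric] by auto
  then have "2 * a0 - 2 + a2 = s \<or> 2 * a0 - 2 + a2 = -s"
    by auto
  with \<open>s^2 = 3\<close> have a0: "(2 * a0 - 2 + a2)^2 = 3"
    by auto
  from a2 show a2_sq: "a2^2 = -1"
    by auto
  have "4 * (a0^2 - ((2 - a2) * a0 + a2)) = (2 * a0 - 2 + a2)^2 - 3 - (a2^2 + 1)"
    by (simp add: power2_eq_square algebra_simps)
  also have "\<dots> = 0"
    using a0 a2_sq by simp
  finally show "a0^2 = (2 - a2) * a0 + a2"
    by (simp only: mult_eq_0_iff right_minus_eq) simp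
qed

theorem mainTheorem2:
  fixes a0 a2 :: complex and z :: "nat \<Rightarrow> complex"
  assumes "(a0, a2) \<in>
     {(1 + \<i>/2 - complex_of_real (sqrt 3)/2, -\<i>),
      (1 + \<i>/2 + complex_of_real (sqrt 3)/2, -\<i>),
      (1 - \<i>/2 - complex_of_real (sqrt 3)/2, \<i>),
      (1 - \<i>/2 + complex_of_real (sqrt 3)/2, \<i>)}"
    and "satisfies_rec a0 a2 z"
  shows "\<forall>n\<ge>1. z (n + 12) = z n"
proof (intro allI impI)
  fix n :: nat
  assume "n \<ge> 1"
  then have rec: "z (n + j) \<noteq> 0 \<and> z (n + j + 2) = (a2 * z (n + j) + z (n + j + 1) + a0) / z (n + j)"
    for j
    using assms(2) unfolding satisfies_rec_def by simp
  have "z (n + 12) = z (n + 0)"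
  proof (rule period_12[of a2 a0 "\<lambda>j. z (n + j)"])
    show "a2^2 = -1" "a0^2 = (2 - a2) * a0 + a2"
      using parameter_relations[OF assms(1)] by simp_all
    show "z (n + j) \<noteq> 0" for j
      using rec by simp
    show "z (n + j) * z (n + (j + 2)) = a2 * z (n + j) + z (n + (j + 1)) + a0" for j
      using rec[of j] by (simp add: add.assoc)
  qed
  then show "z (n + 12) = z n" by simp
qed

end
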